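(* In the setting described in the context, with $\mathbf{C}\in\mathbb{R}^{n\times n}$ defined entrywise by $$[\mathbf C]_{ij}=\begin{cases}\frac{1}{2n_{s(i)}}\Big(\frac{a_i}{w_i}-\frac{1-a_i}{1-w_i}\Big)&\text{if }j=i,\\[4pt] \frac{1}{2n_{s(i)}}\Big[\Big(1-\frac{a_i}{w_i}\Big)[\boldsymbol\beta_1^{r(i)}(x_i)]_j+\Big(\frac{1-a_i}{1-w_i}-1\Big)[\boldsymbol\beta_0^{r(i)}(x_i)]_j\Big]&\text{if }j\ne i,\end{cases}$$ the MMD test statistic satisfies $T_n^{\mathrm{MMD}}:=n\|\bar\psi_n\|_{\mathcal{H}}^2=n\langle\mathbf C,\mathbf K\mathbf C\mathbf L\rangle_F$.
   Context: Let $k,\ell$ be kernels on $\mathcal{X},\mathcal{Y}$ with feature maps $K_x,L_y$, and $\mathcal{H}=\mathcal{H}_\mathcal{X}\otimes\mathcal{H}_\mathcal{Y}$ the tensor-product RKHS with kernel $k(x,x')\ell(y,y')$ and feature map $\Lambda_{x,y}=K_x\otimes L_y$. Data $z_i=(x_i,a_i,y_i)\in\mathcal{X}\times\{0,1\}\times\mathcal{Y}$, $i\in[n]$. $[n]$ is partitioned into folds $\mathcal{I}^1,\mathcal{I}^2$ of sizes $n_1,n_2$; for index $i$, $s(i)$ is the fold containing $i$ and $r(i)=3-s(i)$. For each $r\in\{1,2\}$ (fitted on fold $r$) there are propensity estimates $\pi_n^r:\mathcal{X}\to(0,1)$ and outcome models $\theta^r_{n,a}(x)=\sum_{j=1}^n[\boldsymbol\beta_a^r(x)]_j\Lambda_{x,y_j}$,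 $a\in\{0,1\}$, with coefficient vectors $\boldsymbol\beta^r_a(x)\in\mathbb{R}^n$ satisfying $[\boldsymbol\beta^r_a(x)]_j=0$ whenever $j\notin\mathcal{I}^r$ or $a_j\neq a$. Write $w_i=\pi_n^{r(i)}(x_i)$. The cross-fitted one-step estimator is $\bar\psi_n=\frac12\sum_{r=1}^2\frac1{n_s}\sum_{i\in\mathcal{I}^s}\Big[\Big(\frac{a_i}{\pi^r_n(x_i)}-\frac{1-a_i}{1-\pi^r_n(x_i)}\Big)\big(\Lambda_{x_i,y_i}-\theta^r_{n,a_i}(x_i)\big)+\theta^r_{n,1}(x_i)-\theta^r_{n,0}(x_i)\Big]$ with $s=3-r$ (this equals $\frac12\sum_r(\psi^r_n+\mathbb{E}_{P_n^s}\phi_n^r)$ for the efficient influence function $\phi^r_n$, since the plug-in terms cancel). $\mathbf K,\mathbf L\in\mathbb{R}^{n\times n}$ are Gram matrices $[\mathbf K]_{ij}=k(x_i,x_j)$, $[\mathbf L]_{ij}=\ell(y_i,y_j)$, and $\langle\mathbf A,\mathbf B\rangle_F=\mathrm{tr}(\mathbf A^\top\mathbf B)$. *)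

theory Defs
  imports "HOL-Analysis.Analysis" "Jordan_Normal_Form.Matrix"
begin

text \<open>Indices are 0..<n. A fold assignment s maps each index to its fold 1 or 2.\<close>

definition fold_set :: "nat \<Rightarrow> (nat \<Rightarrow> nat) \<Rightarrow> nat \<Rightarrow> nat set" where
  "fold_set n s r = {i. i < n \<and> s i = r}"

definition fold_size :: "nat \<Rightarrow> (nat \<Rightarrow> nat) \<Rightarrow> nat \<Rightarrow> nat" where
  "fold_size n s r = card (fold_set n s r)"

definition theta :: "nat \<Rightarrow> ('x \<Rightarrow> 'y \<Rightarrow> 'h::real_vector) \<Rightarrow> (nat \<Rightarrow> 'y)
    \<Rightarrow> (nat \<Rightarrow> real) \<Rightarrow> 'x \<Rightarrow> 'h" where
  "theta n Lam y b x0 = (\<Sum>j<n. b j *\<^sub>R Lam x0 (y j))"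

text \<open>Cross-fitted one-step estimator. ps r is the propensity fitted on fold r,
  beta r a x is the coefficient vector of theta^r_{n,a}(x).\<close>
definition one_step ::
  "nat \<Rightarrow> (nat \<Rightarrow> nat) \<Rightarrow> ('x \<Rightarrow> 'y \<Rightarrow> 'h::real_vector) \<Rightarrow> (nat \<Rightarrow> 'x) \<Rightarrow> (nat \<Rightarrow> nat)
    \<Rightarrow> (nat \<Rightarrow> 'y) \<Rightarrow> (nat \<Rightarrow> 'x \<Rightarrow> real) \<Rightarrow> (nat \<Rightarrow> nat \<Rightarrow> 'x \<Rightarrow> nat \<Rightarrow> real) \<Rightarrow> 'h" where
  "one_step n s Lam x a y ps beta =
     (1/2) *\<^sub>R (\<Sum>r\<in>{1,2::nat}.
        (1 / real (fold_size n s (3 - r))) *\<^sub>R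
        (\<Sum>i\<in>fold_set n s (3 - r).
           (real (a i) / ps r (x i) - (1 - real (a i)) / (1 - ps r (x i))) *\<^sub>R
              (Lam (x i) (y i) - theta n Lam y (beta r (a i) (x i)) (x i))
           + theta n Lam y (beta r 1 (x i)) (x i) - theta n Lam y (beta r 0 (x i)) (x i)))"

definition C_mat ::
  "nat \<Rightarrow> (nat \<Rightarrow> nat) \<Rightarrow> (nat \<Rightarrow> 'x) \<Rightarrow> (nat \<Rightarrow> nat)
    \<Rightarrow> (nat \<Rightarrow> 'x \<Rightarrow> real) \<Rightarrow> (nat \<Rightarrow> nat \<Rightarrow> 'x \<Rightarrow> nat \<Rightarrow> real) \<Rightarrow> real mat" where
  "C_mat n s x a ps beta = mat n n (\<lambda>(i, j).
     (let w = ps (3 - s i) (x i); ai = real (a i); c = 1 / (2 * real (fold_size n s (s i))) in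
      if j = i then c * (ai / w - (1 - ai) / (1 - w))
      else c * ((1 - ai / w) * beta (3 - s i) 1 (x i) j
                + ((1 - ai) / (1 - w) - 1) * beta (3 - s i) 0 (x i) j)))"

definition gram :: "nat \<Rightarrow> ('z \<Rightarrow> 'z \<Rightarrow> real) \<Rightarrow> (nat \<Rightarrow> 'z) \<Rightarrow> real mat" where
  "gram n k z = mat n n (\<lambda>(i, j). k (z i) (z j))"

definition mat_trace :: "real mat \<Rightarrow> real" where
  "mat_trace A = (\<Sum>i<dim_row A. A $$ (i, i))"

definition frob :: "real mat \<Rightarrow> real mat \<Rightarrow> real" where
  "frob A B = mat_trace (transpose_mat A * B)"

end

theory Submission
  imports Defs
begin

(* Each sample i enters the cross-fitted estimator through its AIPW pseudo-outcome, scaled by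
   1/(2 n_s(i)). Expanding the outcome models, this pseudo-outcome is a linear combination of
   the features Lambda(x_i, y_j), and row i of C lists its coefficients: the diagonal entry comes
   from the observed Lambda(x_i, y_i), while the fitted coefficients beta(x_i)_i vanish because
   sample i lies outside the fold the outcome models were fitted on. Hence the estimator is
   sum_ij C_ij Lambda(x_i, y_j), and the tensor-product structure
   <Lambda(x,y), Lambda(x',y')> = k(x,x') l(y,y') turns its squared norm into
   sum C_ij C_i'j' K_ii' L_j'j = <C, K C L>_F. *)

lemma frob_mult_expand:
  fixes A K L :: "real mat"
  assumes "A \<in> carrier_mat n n" "K \<in> carrier_mat n n" "L \<in> carrier_mat n n"
  shows "frob A (K * A * L) = (\<Sum>i<n. \<Sum>j<n. \<Sum>i'<n. \<Sum>j'<n.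
           A $$ (i, j) * A $$ (i', j') * K $$ (i, i') * L $$ (j', j))"
proof -
  have "frob A (K * A * L) = (\<Sum>j<n. \<Sum>i<n.
          A $$ (i, j) * (\<Sum>i'<n. K $$ (i, i') * (\<Sum>j'<n. A $$ (i', j') * L $$ (j', j))))"
    using assms unfolding frob_def mat_trace_def
    by (auto simp: scalar_prod_def lessThan_atLeast0 intro!: sum.cong)
  also have "\<dots> = (\<Sum>j<n. \<Sum>i<n. \<Sum>i'<n. \<Sum>j'<n.
          A $$ (i, j) * A $$ (i', j') * K $$ (i, i') * L $$ (j', j))"
    by (simp add: sum_distrib_left mult_ac)
  also have "\<dots> = (\<Sum>i<n. \<Sum>j<n. \<Sum>i'<n. \<Sum>j'<n.
          A $$ (i, j) * A $$ (i', j') * K $$ (i, i') * L $$ (j', j))"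
    by (rule sum.swap)
  finally show ?thesis .
qed

lemma norm_sum_tensor_features_eq_frob:
  fixes Lam :: "'x \<Rightarrow> 'y \<Rightarrow> 'h::real_inner" and C :: "real mat"
  assumes C: "C \<in> carrier_mat n n"
    and tensor: "\<And>u v u' v'. inner (Lam u v) (Lam u' v') = k u u' * l v v'"
    and l_sym: "\<And>v v'. l v v' = l v' v"
  shows "(norm (\<Sum>i<n. \<Sum>j<n. C $$ (i, j) *\<^sub>R Lam (x i) (y j)))\<^sup>2
           = frob C (gram n k x * C * gram n l y)"
proof -
  have "(norm (\<Sum>i<n. \<Sum>j<n. C $$ (i, j) *\<^sub>R Lam (x i) (y j)))\<^sup>2
          = (\<Sum>i<n. \<Sum>j<n. \<Sum>i'<n. \<Sum>j'<n.
               C $$ (i, j) * C $$ (i', j') * k (x i) (x i') * l (y j) (y j'))"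
    unfolding power2_norm_eq_inner inner_sum_left
    by (simp add: inner_sum_right tensor sum_distrib_left mult_ac)
  also have "\<dots> = frob C (gram n k x * C * gram n l y)"
    by (subst frob_mult_expand[OF C]) (auto simp: gram_def l_sym intro!: sum.cong)
  finally show ?thesis .
qed

definition pseudo_outcome ::
  "nat \<Rightarrow> ('x \<Rightarrow> 'y \<Rightarrow> 'h::real_vector) \<Rightarrow> (nat \<Rightarrow> 'x) \<Rightarrow> (nat \<Rightarrow> nat) \<Rightarrow> (nat \<Rightarrow> 'y)
    \<Rightarrow> ('x \<Rightarrow> real) \<Rightarrow> (nat \<Rightarrow> 'x \<Rightarrow> nat \<Rightarrow> real) \<Rightarrow> nat \<Rightarrow> 'h" where
  "pseudo_outcome n Lam x a y p b i =
     (real (a i) / p (x i) - (1 - real (a i)) / (1 - p (x i))) *\<^sub>R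
        (Lam (x i) (y i) - theta n Lam y (b (a i) (x i)) (x i))
     + theta n Lam y (b 1 (x i)) (x i) - theta n Lam y (b 0 (x i)) (x i)"

lemma one_step_eq_sum_pseudo_outcome:
  assumes folds: "\<And>i. i < n \<Longrightarrow> s i \<in> {1, 2}"
  shows "one_step n s Lam x a y ps beta
           = (\<Sum>i<n. (1 / (2 * real (fold_size n s (s i)))) *\<^sub>R
                pseudo_outcome n Lam x a y (ps (3 - s i)) (beta (3 - s i)) i)"
    (is "_ = (\<Sum>i<n. ?term i)")
proof -
  have split: "{..<n} = fold_set n s 2 \<union> fold_set n s 1"
    using folds by (auto simp: fold_set_def)
  have "one_step n s Lam x a y ps beta
          = (\<Sum>i\<in>fold_set n s 2. (1 / (2 * real (fold_size n s 2))) *\<^sub>R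
               pseudo_outcome n Lam x a y (ps 1) (beta 1) i)
            + (\<Sum>i\<in>fold_set n s 1. (1 / (2 * real (fold_size n s 1))) *\<^sub>R
               pseudo_outcome n Lam x a y (ps 2) (beta 2) i)"
    by (simp add: one_step_def pseudo_outcome_def scaleR_sum_right scaleR_add_right)
  also have "\<dots> = (\<Sum>i\<in>fold_set n s 2. ?term i) + (\<Sum>i\<in>fold_set n s 1. ?term i)"
    by (auto simp: fold_set_def intro!: arg_cong2[where f = "(+)"] sum.cong)
  also have "\<dots> = (\<Sum>i<n. ?term i)"
    unfolding split by (rule sum.union_disjoint[symmetric]) (auto simp: fold_set_def)
  finally show ?thesis .
qed

lemma pseudo_outcome_eq_sum_features:
  assumes "i < n"
  shows "pseudo_outcome n Lam x a y p b i
           = (\<Sum>j<n. ((real (a i) / p (x i) - (1 - real (a i)) / (1 - p (x i)))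
                       * ((if j = i then 1 else 0) - b (a i) (x i) j)
                     + b 1 (x i) j - b 0 (x i) j) *\<^sub>R Lam (x i) (y j))"
proof -
  have "Lam (x i) (y i) = (\<Sum>j<n. (if j = i then 1 else 0) *\<^sub>R Lam (x i) (y j))"
    using assms by (simp add: if_distrib[where f = "\<lambda>t. t *\<^sub>R _"] cong: if_cong)
  then show ?thesis
    unfolding pseudo_outcome_def theta_def
    by (simp add: scaleR_sum_right sum_subtractf[symmetric] sum.distrib[symmetric]
        scaleR_diff_left scaleR_diff_right scaleR_add_left algebra_simps)
qed

lemma pseudo_outcome_eq_sum_row:
  assumes "i < n" "a i \<in> {0, 1}" "b 0 (x i) i = 0" "b 1 (x i) i = 0"
  shows "pseudo_outcome n Lam x a y p b i
           = (\<Sum>j<n. (if j = i then real (a i) / p (x i) - (1 - real (a i)) / (1 - p (x i))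
                       else (1 - real (a i) / p (x i)) * b 1 (x i) j
                            + ((1 - real (a i)) / (1 - p (x i)) - 1) * b 0 (x i) j)
                     *\<^sub>R Lam (x i) (y j))"
proof -
  have "(real (a i) / p (x i) - (1 - real (a i)) / (1 - p (x i)))
          * ((if j = i then 1 else 0) - b (a i) (x i) j) + b 1 (x i) j - b 0 (x i) j
        = (if j = i then real (a i) / p (x i) - (1 - real (a i)) / (1 - p (x i))
           else (1 - real (a i) / p (x i)) * b 1 (x i) j
                + ((1 - real (a i)) / (1 - p (x i)) - 1) * b 0 (x i) j)" for j
    using assms(2-) by (cases "j = i") (auto simp: algebra_simps)
  then show ?thesis
    by (simp add: pseudo_outcome_eq_sum_features[OF \<open>i < n\<close>])
qed

lemma one_step_eq_sum_C_mat:
  assumes folds: "\<And>i. i < n \<Longrightarrow> s i \<in> {1, 2}"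
    and treat: "\<And>i. i < n \<Longrightarrow> a i \<in> {0, 1}"
    and beta_supp: "\<And>r b u j. r \<in> {1, 2} \<Longrightarrow> b \<in> {0, 1} \<Longrightarrow>
                       (j \<notin> fold_set n s r \<or> a j \<noteq> b) \<Longrightarrow> beta r b u j = 0"
  shows "one_step n s Lam x a y ps beta
           = (\<Sum>i<n. \<Sum>j<n. C_mat n s x a ps beta $$ (i, j) *\<^sub>R Lam (x i) (y j))"
proof -
  have own_fold: "beta (3 - s i) b (x i) i = 0" if "i < n" "b \<in> {0, 1}" for i b
    using folds[OF \<open>i < n\<close>] by (intro beta_supp that) (auto simp: fold_set_def)
  have "(1 / (2 * real (fold_size n s (s i)))) *\<^sub>R
          pseudo_outcome n Lam x a y (ps (3 - s i)) (beta (3 - s i)) i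
        = (\<Sum>j<n. C_mat n s x a ps beta $$ (i, j) *\<^sub>R Lam (x i) (y j))" if "i < n" for i
  proof -
    have "pseudo_outcome n Lam x a y (ps (3 - s i)) (beta (3 - s i)) i
          = (\<Sum>j<n. (if j = i then real (a i) / ps (3 - s i) (x i)
                                      - (1 - real (a i)) / (1 - ps (3 - s i) (x i))
                      else (1 - real (a i) / ps (3 - s i) (x i)) * beta (3 - s i) 1 (x i) j
                           + ((1 - real (a i)) / (1 - ps (3 - s i) (x i)) - 1)
                             * beta (3 - s i) 0 (x i) j)
                    *\<^sub>R Lam (x i) (y j))"
      using \<open>i < n\<close> treat own_fold by (intro pseudo_outcome_eq_sum_row) auto
    then show ?thesis
      using \<open>i < n\<close> by (auto simp: scaleR_sum_right C_mat_def Let_def intro!: sum.cong)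
  qed
  then show ?thesis
    by (simp add: one_step_eq_sum_pseudo_outcome[OF folds])
qed

theorem proposition3p5:
  fixes n :: nat
    and s :: "nat \<Rightarrow> nat"
    and x :: "nat \<Rightarrow> 'x" and a :: "nat \<Rightarrow> nat" and y :: "nat \<Rightarrow> 'y"
    and k :: "'x \<Rightarrow> 'x \<Rightarrow> real" and l :: "'y \<Rightarrow> 'y \<Rightarrow> real"
    and Kf :: "'x \<Rightarrow> 'hx::real_inner" and Lf :: "'y \<Rightarrow> 'hy::real_inner"
    and Lam :: "'x \<Rightarrow> 'y \<Rightarrow> 'h::real_inner"
    and ps :: "nat \<Rightarrow> 'x \<Rightarrow> real"
    and beta :: "nat \<Rightarrow> nat \<Rightarrow> 'x \<Rightarrow> nat \<Rightarrow> real"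
  assumes k_feat: "\<And>u v. k u v = inner (Kf u) (Kf v)"
    and l_feat: "\<And>u v. l u v = inner (Lf u) (Lf v)"
    and tensor: "\<And>u v u' v'. inner (Lam u v) (Lam u' v') = k u u' * l v v'"
    and folds: "\<And>i. i < n \<Longrightarrow> s i \<in> {1, 2}"
    and fold_nonempty: "fold_size n s 1 > 0" "fold_size n s 2 > 0"
    and treat: "\<And>i. i < n \<Longrightarrow> a i \<in> {0, 1}"
    and pi_range: "\<And>r u. r \<in> {1, 2} \<Longrightarrow> 0 < ps r u \<and> ps r u < 1"
    and beta_supp: "\<And>r b u j. r \<in> {1, 2} \<Longrightarrow> b \<in> {0, 1} \<Longrightarrow>
                       (j \<notin> fold_set n s r \<or> a j \<noteq> b) \<Longrightarrow> beta r b u j = 0"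
  shows "real n * (norm (one_step n s Lam x a y ps beta))\<^sup>2
           = real n * frob (C_mat n s x a ps beta)
                 (gram n k x * C_mat n s x a ps beta * gram n l y)"
proof -
  txt \<open>Propensities, fold sizes and \<open>k\<close> enter both sides in the same way (including the junk
    values of division by zero), so \<open>k_feat\<close>, \<open>fold_nonempty\<close> and \<open>pi_range\<close> are not needed.\<close>
  have l_sym: "l v v' = l v' v" for v v'
    by (simp add: l_feat inner_commute)
  have "C_mat n s x a ps beta \<in> carrier_mat n n"
    by (simp add: C_mat_def)
  then have "(norm (\<Sum>i<n. \<Sum>j<n. C_mat n s x a ps beta $$ (i, j) *\<^sub>R Lam (x i) (y j)))\<^sup>2
               = frob (C_mat n s x a ps beta) (gram n k x * C_mat n s x a ps beta * gram n l y)"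
    using tensor l_sym by (rule norm_sum_tensor_features_eq_frob)
  moreover have "one_step n s Lam x a y ps beta
      = (\<Sum>i<n. \<Sum>j<n. C_mat n s x a ps beta $$ (i, j) *\<^sub>R Lam (x i) (y j))"
    using folds treat beta_supp by (rule one_step_eq_sum_C_mat)
  ultimately show ?thesis
    by simp
qed

end
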